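(* In the longitudinal random intercept setting described in the context, suppose that $N$, $T$, $\widetilde{\alpha}$, $1-\alpha$, $\psi$ and $\rho$ are fixed, and let $(\widehat{\sigma}_\varepsilon,\widehat{\sigma}_\mu)$ be any one of the three pairs of estimators listed in the context. Then the scaled expected length $$ \frac{ z_{1-\alpha/2}}{\Phi^{-1}((c^*+1)/2)} \cdot \frac{ E \left( (\widehat{\sigma}_{\varepsilon}/\sigma_{\varepsilon}) \left( \sum_{i=1}^N \sum_{t=1}^T (u_{it} - \overline{u}_i)^2 \right)^{-1/2} \left( \widehat{w}^{1/2}\, \mathcal{I}(\mathcal{B}) + \mathcal{I}(\mathcal{B}^c) \right) \right)}{E \left( (\widehat{\sigma}_{\varepsilon}/\sigma_{\varepsilon}) \left( \sum_{i=1}^N \sum_{t=1}^T (u_{it} - \overline{u}_i)^2 \right)^{-1/2} \right)} $$ is an even function of $\tau\in(-1,1)$.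
   Context: Model: for $i=1,\dots,N$ and $t=1,\dots,T$, $y_{it} = a + \beta x_{it} + \mu_i + \varepsilon_{it}$, where the $\varepsilon_{it}$ are i.i.d. $N(0,\sigma_\varepsilon^2)$, independent of the vectors $(\mu_i, x_{i1},\dots,x_{iT})$, $i=1,\dots,N$, which are i.i.d. multivariate normal with mean zero and covariance matrix $\begin{bmatrix}\sigma_\mu^2 & \widetilde{\tau}\sigma_\mu\sigma_x e^{\prime}\\ \widetilde{\tau}\sigma_\mu\sigma_x e & \sigma_x^2 G\end{bmatrix}$, with $e$ the $T$-vector of ones and $G$ the $T\times T$ matrix with 1's on the diagonal and $\rho$ off the diagonal. Here $\sigma_\varepsilon,\sigma_\mu,\sigma_x>0$. The non-exogeneity parameter is $\tau = \widetilde{\tau}\,(T/(1+(T-1)\rho))^{1/2}\in(-1,1)$ (it equals $\mathrm{Corr}(\mu_i,\overline{x}_i)$), and $\psi=\sigma_\mu/\sigma_\varepsilon$. The covariates are represented as $x_{it}/\sigma_x = (1-\rho)^{1/2}u_{it} + \rho^{1/2}v_i$, where $\rho\in[0,1)$ and $u_{11},\dots,u_{NT},v_1,\dots,v_N$ are i.i.d. $N(0,1)$, independent of the $\varepsilon_{it}$; $\mu_i$ is generated from its conditional distribution given $(x_{i1},\dots,x_{iT})$. $x$ denotes the vector of all $x_{it}$; $\overline{u}_i=T^{-1}\sum_t u_{it}$. Notation: $\overline{y}_i = T^{-1}\sum_t y_{it}$, $\overline{x}_i=T^{-1}\sum_t x_{it}$, $\overline{x}=(NT)^{-1}\sum_{i,t}x_{it}$,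 $\overline{y}=(NT)^{-1}\sum_{i,t}y_{it}$, $\mathrm{SSB}=\sum_i(\overline{x}_i-\overline{x})^2$, $\mathrm{SSW}=\sum_{i,t}(x_{it}-\overline{x}_i)^2$, $r(x)=\mathrm{SSB}/\mathrm{SSW}$, $q(\psi,T)=\psi^2+1/T$, $z_c=\Phi^{-1}(c)$ with $\Phi$ the $N(0,1)$ cdf, $\mathcal{I}(\mathcal{A})$ is 1 if statement $\mathcal{A}$ is true and 0 otherwise. Estimators of $\beta$: $\widetilde{\beta}_W = \sum_{i,t}(x_{it}-\overline{x}_i)(y_{it}-\overline{y}_i)/\mathrm{SSW}$ (OLS in the fixed effects model $y_{it}-\overline{y}_i=\beta(x_{it}-\overline{x}_i)+(\varepsilon_{it}-\overline{\varepsilon}_i)$), $\mathrm{Var}(\widetilde{\beta}_W\mid x)=\sigma_\varepsilon^2/\mathrm{SSW}$; $\widetilde{\beta}_B=\sum_i(\overline{x}_i-\overline{x})(\overline{y}_i-\overline{y})/\mathrm{SSB}$ (OLS slope in the between model $\overline{y}_i=a+\beta\overline{x}_i+\mu_i+\overline{\varepsilon}_i$), $\mathrm{Var}_0(\widetilde{\beta}_B\mid x)=(\sigma_\mu^2+\sigma_\varepsilon^2/T)/\mathrm{SSB}$; GLS estimator (random intercept model with $\tau=0$) $\widehat{\beta}(\psi)=\big(\mathrm{SSW}\,\widetilde{\beta}_W + (\mathrm{SSB}/q(\psi,T))\widetilde{\beta}_B\big)/\big(\mathrm{SSW}+\mathrm{SSB}/q(\psi,T)\big)$, $\mathrm{Var}_0(\widehat{\beta}(\psi)\mid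 x)=\sigma_\varepsilon^2/(\mathrm{SSW}+\mathrm{SSB}/q(\psi,T))$. Estimator pairs $(\widehat{\sigma}_\varepsilon^2,\widehat{\sigma}_\mu^2)$: (1) unbiased-type: $\widehat{\sigma}_\varepsilon^2=\frac{1}{N(T-1)-1}\sum_{i,t}r_{it}^2$ and $\widehat{\sigma}_\mu^2=\max(0,\frac{1}{N-2}\sum_i\overline{r}_i^2-\frac{1}{NT(T-1)-T}\sum_{i,t}r_{it}^2)$, where $r_{it}$ are the OLS residuals of the fixed effects model and $\overline{r}_i$ the OLS residuals of the between model; (2) Hsiao's maximum likelihood estimators of $\sigma_\varepsilon^2,\sigma_\mu^2$ in the Gaussian random intercept model (with $\tau=0$), maximizing the log-likelihood subject to $\sigma_\varepsilon^2\ge0,\sigma_\mu^2\ge0$; (3) Wooldridge's estimators: $\widehat{\sigma}_\varepsilon^2=\max(-\epsilon\widetilde{\sigma}_\varepsilon^2,\widetilde{\sigma}_\varepsilon^2)$ with $\epsilon$ a very small positive number and $\widetilde{\sigma}_\varepsilon^2=\frac{1}{NT-K}\sum_{i,t}\tilde{r}_{it}^2-\frac{1}{NT(T-1)/2-K}\sum_i\sum_{t=1}^{T-1}\sum_{s=t+1}^T\tilde{r}_{it}\tilde{r}_{is}$, and $\widehat{\sigma}_\mu^2=\max(0,\frac{1}{NT(T-1)/2-K}\sum_i\sum_{t=1}^{T-1}\sum_{s=t+1}^T\tilde{r}_{it}\tilde{r}_{is})$, where $\tilde{r}_{it}$ are the residuals from pooled OLS of $y_{it}$ on an intercept and $x_{it}$,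 and $K\in\{0,2\}$. $\widehat{\sigma}_\varepsilon,\widehat{\sigma}_\mu$ are the nonnegative square roots and $\widehat{\psi}=\widehat{\sigma}_\mu/\widehat{\sigma}_\varepsilon$. Two-stage interval: Hausman statistic $H(\sigma_\varepsilon,\sigma_\mu)=(\widetilde{\beta}_W-\widetilde{\beta}_B)^2/\big(\mathrm{Var}(\widetilde{\beta}_W\mid x)+\mathrm{Var}_0(\widetilde{\beta}_B\mid x)\big)$. If $H\le z^2_{1-\widetilde{\alpha}/2}$ the interval $K(\sigma_\varepsilon,\sigma_\mu)$ is $[\widehat{\beta}(\psi)\pm z_{1-\alpha/2}(\mathrm{Var}_0(\widehat{\beta}(\psi)\mid x))^{1/2}]$, otherwise it is $[\widetilde{\beta}_W\pm z_{1-\alpha/2}\sigma_\varepsilon/\mathrm{SSW}^{1/2}]$. $K(\widehat{\sigma}_\varepsilon,\widehat{\sigma}_\mu)$ replaces $\sigma_\varepsilon,\sigma_\mu,\psi$ by $\widehat{\sigma}_\varepsilon,\widehat{\sigma}_\mu,\widehat{\psi}$ throughout. $\mathcal{B}$ is the statement $H(\widehat{\sigma}_\varepsilon,\widehat{\sigma}_\mu)\le z^2_{1-\widetilde{\alpha}/2}$; $\widehat{w}=q(\widehat{\psi},T)/(q(\widehat{\psi},T)+r(x))$. Adjustment constant: for a fixed $\widetilde{\rho}\in(0,1)$, $c_{\min}$ is $P(\beta\in K(\widehat{\sigma}_\varepsilon,\widehat{\sigma}_\mu))$ minimized over $\tau\in(-1,1)$, $\psi\in(0,\infty)$, $\rho\in[0,\widetilde{\rho}]$;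 for $c\in(0,1)$, $J_c(\widehat{\sigma}_\varepsilon)=[\widetilde{\beta}_W\pm\Phi^{-1}((c+1)/2)\widehat{\sigma}_\varepsilon/\mathrm{SSW}^{1/2}]$; $c^*$ is the value of $c$ with $P(\beta\in J_c(\widehat{\sigma}_\varepsilon))=c_{\min}$. *)

theory Defs
  imports "HOL-Probability.Probability"
begin

definition std_normal :: "real measure" where
  "std_normal = density lborel std_normal_density"

definition Phi :: "real \<Rightarrow> real" where
  "Phi x = measure std_normal {..x}"

definition Phi_inv :: "real \<Rightarrow> real" where
  "Phi_inv c = (THE z. Phi z = c)"

text \<open>Indices i range over 0..N-1 and t over 0..T-1. The variable w_i is the
  standard normal innovation used to generate mu_i from its conditional
  distribution given (x_i1,...,x_iT); eps_it is the standardised error.\<close>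

datatype nidx = U nat nat | V nat | W nat | Eps nat nat

definition idxs :: "nat \<Rightarrow> nat \<Rightarrow> nidx set" where
  "idxs N T = {U i t | i t. i < N \<and> t < T} \<union> {V i | i. i < N} \<union> {W i | i. i < N}
              \<union> {Eps i t | i t. i < N \<and> t < T}"

definition sample_space :: "nat \<Rightarrow> nat \<Rightarrow> (nidx \<Rightarrow> real) measure" where
  "sample_space N T = PiM (idxs N T) (\<lambda>_. std_normal)"

definition model_x :: "real \<Rightarrow> real \<Rightarrow> (nidx \<Rightarrow> real) \<Rightarrow> nat \<Rightarrow> nat \<Rightarrow> real" where
  "model_x sx rho \<omega> i t = sx * (sqrt (1 - rho) * \<omega> (U i t) + sqrt rho * \<omega> (V i))"

definition tau_tilde :: "nat \<Rightarrow> real \<Rightarrow> real \<Rightarrow> real" where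
  "tau_tilde T rho tau = tau * sqrt ((1 + (real T - 1) * rho) / real T)"

text \<open>mu_i drawn from its conditional normal distribution given x_i:
  mean = tau_tilde sigma_mu sigma_x e' (sigma_x^2 G)^(-1) x_i
       = tau_tilde (sigma_mu/sigma_x) (sum_t x_it) / (1+(T-1)rho),
  variance = sigma_mu^2 (1 - tau_tilde^2 T/(1+(T-1)rho)).\<close>
definition model_mu ::
  "nat \<Rightarrow> real \<Rightarrow> real \<Rightarrow> real \<Rightarrow> real \<Rightarrow> real \<Rightarrow> (nidx \<Rightarrow> real) \<Rightarrow> nat \<Rightarrow> real" where
  "model_mu T se sx psi rho tau \<omega> i =
     (let smu = psi * se; tt = tau_tilde T rho tau; g = 1 + (real T - 1) * rho in
      tt * (smu / sx) * (\<Sum>t<T. model_x sx rho \<omega> i t) / g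
      + smu * sqrt (1 - tt\<^sup>2 * real T / g) * \<omega> (W i))"

definition model_y ::
  "nat \<Rightarrow> real \<Rightarrow> real \<Rightarrow> real \<Rightarrow> real \<Rightarrow> real \<Rightarrow> real \<Rightarrow> real \<Rightarrow> (nidx \<Rightarrow> real) \<Rightarrow> nat \<Rightarrow> nat \<Rightarrow> real" where
  "model_y T a b se sx psi rho tau \<omega> i t =
     a + b * model_x sx rho \<omega> i t + model_mu T se sx psi rho tau \<omega> i + se * \<omega> (Eps i t)"

definition mean_i :: "nat \<Rightarrow> (nat \<Rightarrow> nat \<Rightarrow> real) \<Rightarrow> nat \<Rightarrow> real" where
  "mean_i T x i = (\<Sum>t<T. x i t) / real T"

definition mean_all :: "nat \<Rightarrow> nat \<Rightarrow> (nat \<Rightarrow> nat \<Rightarrow> real) \<Rightarrow> real" where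
  "mean_all N T x = (\<Sum>i<N. \<Sum>t<T. x i t) / (real N * real T)"

definition SSB :: "nat \<Rightarrow> nat \<Rightarrow> (nat \<Rightarrow> nat \<Rightarrow> real) \<Rightarrow> real" where
  "SSB N T x = (\<Sum>i<N. (mean_i T x i - mean_all N T x)\<^sup>2)"

definition SSW :: "nat \<Rightarrow> nat \<Rightarrow> (nat \<Rightarrow> nat \<Rightarrow> real) \<Rightarrow> real" where
  "SSW N T x = (\<Sum>i<N. \<Sum>t<T. (x i t - mean_i T x i)\<^sup>2)"

definition r_ratio :: "nat \<Rightarrow> nat \<Rightarrow> (nat \<Rightarrow> nat \<Rightarrow> real) \<Rightarrow> real" where
  "r_ratio N T x = SSB N T x / SSW N T x"

definition qf :: "real \<Rightarrow> nat \<Rightarrow> real" where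
  "qf psi T = psi\<^sup>2 + 1 / real T"

definition betaW :: "nat \<Rightarrow> nat \<Rightarrow> (nat \<Rightarrow> nat \<Rightarrow> real) \<Rightarrow> (nat \<Rightarrow> nat \<Rightarrow> real) \<Rightarrow> real" where
  "betaW N T x y = (\<Sum>i<N. \<Sum>t<T. (x i t - mean_i T x i) * (y i t - mean_i T y i)) / SSW N T x"

definition betaB :: "nat \<Rightarrow> nat \<Rightarrow> (nat \<Rightarrow> nat \<Rightarrow> real) \<Rightarrow> (nat \<Rightarrow> nat \<Rightarrow> real) \<Rightarrow> real" where
  "betaB N T x y = (\<Sum>i<N. (mean_i T x i - mean_all N T x) * (mean_i T y i - mean_all N T y)) / SSB N T x"

definition beta_gls :: "nat \<Rightarrow> nat \<Rightarrow> real \<Rightarrow> (nat \<Rightarrow> nat \<Rightarrow> real) \<Rightarrow> (nat \<Rightarrow> nat \<Rightarrow> real) \<Rightarrow> real" where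
  "beta_gls N T psi x y =
     (SSW N T x * betaW N T x y + (SSB N T x / qf psi T) * betaB N T x y)
     / (SSW N T x + SSB N T x / qf psi T)"

definition fe_res :: "nat \<Rightarrow> nat \<Rightarrow> (nat \<Rightarrow> nat \<Rightarrow> real) \<Rightarrow> (nat \<Rightarrow> nat \<Rightarrow> real) \<Rightarrow> nat \<Rightarrow> nat \<Rightarrow> real" where
  "fe_res N T x y i t = (y i t - mean_i T y i) - betaW N T x y * (x i t - mean_i T x i)"

definition be_res :: "nat \<Rightarrow> nat \<Rightarrow> (nat \<Rightarrow> nat \<Rightarrow> real) \<Rightarrow> (nat \<Rightarrow> nat \<Rightarrow> real) \<Rightarrow> nat \<Rightarrow> real" where
  "be_res N T x y i = (mean_i T y i - mean_all N T y) - betaB N T x y * (mean_i T x i - mean_all N T x)"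

definition est_unbiased :: "nat \<Rightarrow> nat \<Rightarrow> (nat \<Rightarrow> nat \<Rightarrow> real) \<Rightarrow> (nat \<Rightarrow> nat \<Rightarrow> real) \<Rightarrow> real \<times> real" where
  "est_unbiased N T x y =
     (let S = (\<Sum>i<N. \<Sum>t<T. (fe_res N T x y i t)\<^sup>2) in
      (S / (real N * (real T - 1) - 1),
       max 0 ((\<Sum>i<N. (be_res N T x y i)\<^sup>2) / (real N - 2)
              - S / (real N * real T * (real T - 1) - real T))))"

text \<open>Gaussian log-likelihood of the random intercept model (tau = 0):
  y_i ~ N(a e + b x_i, s I + m e e'), with det = s^(T-1) (s + T m) and
  inverse (1/s)(I - m/(s+Tm) e e').\<close>
definition loglik :: "nat \<Rightarrow> nat \<Rightarrow> (nat \<Rightarrow> nat \<Rightarrow> real) \<Rightarrow> (nat \<Rightarrow> nat \<Rightarrow> real)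
                      \<Rightarrow> real \<Rightarrow> real \<Rightarrow> real \<Rightarrow> real \<Rightarrow> real" where
  "loglik N T x y a b s m =
     - (real N * real T / 2) * ln (2 * pi)
     - (1/2) * (\<Sum>i<N. (real T - 1) * ln s + ln (s + real T * m)
         + (1 / s) * ((\<Sum>t<T. (y i t - a - b * x i t)\<^sup>2)
                      - m * (\<Sum>t<T. y i t - a - b * x i t)\<^sup>2 / (s + real T * m)))"

definition est_hsiao :: "nat \<Rightarrow> nat \<Rightarrow> (nat \<Rightarrow> nat \<Rightarrow> real) \<Rightarrow> (nat \<Rightarrow> nat \<Rightarrow> real) \<Rightarrow> real \<times> real" where
  "est_hsiao N T x y =
     (SOME (s, m). s > 0 \<and> m \<ge> 0 \<and>
        (\<exists>a b. \<forall>a' b' s' m'. s' > 0 \<and> m' \<ge> 0 \<longrightarrow>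
                 loglik N T x y a' b' s' m' \<le> loglik N T x y a b s m))"

definition pooled_res :: "nat \<Rightarrow> nat \<Rightarrow> (nat \<Rightarrow> nat \<Rightarrow> real) \<Rightarrow> (nat \<Rightarrow> nat \<Rightarrow> real) \<Rightarrow> nat \<Rightarrow> nat \<Rightarrow> real" where
  "pooled_res N T x y i t =
     (let bP = (\<Sum>i<N. \<Sum>t<T. (x i t - mean_all N T x) * (y i t - mean_all N T y))
               / (\<Sum>i<N. \<Sum>t<T. (x i t - mean_all N T x)\<^sup>2);
          aP = mean_all N T y - bP * mean_all N T x
      in y i t - aP - bP * x i t)"

definition est_wooldridge :: "real \<Rightarrow> nat \<Rightarrow> nat \<Rightarrow> nat \<Rightarrow> (nat \<Rightarrow> nat \<Rightarrow> real) \<Rightarrow> (nat \<Rightarrow> nat \<Rightarrow> real) \<Rightarrow> real \<times> real" where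
  "est_wooldridge eps K N T x y =
     (let r = pooled_res N T x y;
          C = (\<Sum>i<N. \<Sum>t<T. \<Sum>s\<in>{Suc t..<T}. r i t * r i s)
              / (real N * real T * (real T - 1) / 2 - real K);
          st = (\<Sum>i<N. \<Sum>t<T. (r i t)\<^sup>2) / (real N * real T - real K) - C
      in (max (- eps * st) st, max 0 C))"

datatype estimator = Unbiased | Hsiao | Wooldridge real nat

definition valid_estimator :: "estimator \<Rightarrow> bool" where
  "valid_estimator e = (case e of Wooldridge eps K \<Rightarrow> eps > 0 \<and> (K = 0 \<or> K = 2) | _ \<Rightarrow> True)"

definition est_var :: "estimator \<Rightarrow> nat \<Rightarrow> nat \<Rightarrow> (nat \<Rightarrow> nat \<Rightarrow> real) \<Rightarrow> (nat \<Rightarrow> nat \<Rightarrow> real) \<Rightarrow> real \<times> real" where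
  "est_var e N T x y = (case e of Unbiased \<Rightarrow> est_unbiased N T x y
                                | Hsiao \<Rightarrow> est_hsiao N T x y
                                | Wooldridge eps K \<Rightarrow> est_wooldridge eps K N T x y)"

definition sig_eps_hat :: "estimator \<Rightarrow> nat \<Rightarrow> nat \<Rightarrow> (nat \<Rightarrow> nat \<Rightarrow> real) \<Rightarrow> (nat \<Rightarrow> nat \<Rightarrow> real) \<Rightarrow> real" where
  "sig_eps_hat e N T x y = sqrt (fst (est_var e N T x y))"

definition sig_mu_hat :: "estimator \<Rightarrow> nat \<Rightarrow> nat \<Rightarrow> (nat \<Rightarrow> nat \<Rightarrow> real) \<Rightarrow> (nat \<Rightarrow> nat \<Rightarrow> real) \<Rightarrow> real" where
  "sig_mu_hat e N T x y = sqrt (snd (est_var e N T x y))"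

definition psi_hat :: "estimator \<Rightarrow> nat \<Rightarrow> nat \<Rightarrow> (nat \<Rightarrow> nat \<Rightarrow> real) \<Rightarrow> (nat \<Rightarrow> nat \<Rightarrow> real) \<Rightarrow> real" where
  "psi_hat e N T x y = sig_mu_hat e N T x y / sig_eps_hat e N T x y"

definition hausman :: "nat \<Rightarrow> nat \<Rightarrow> (nat \<Rightarrow> nat \<Rightarrow> real) \<Rightarrow> (nat \<Rightarrow> nat \<Rightarrow> real) \<Rightarrow> real \<Rightarrow> real \<Rightarrow> real" where
  "hausman N T x y se smu =
     (betaW N T x y - betaB N T x y)\<^sup>2
     / (se\<^sup>2 / SSW N T x + (smu\<^sup>2 + se\<^sup>2 / real T) / SSB N T x)"

definition event_B :: "estimator \<Rightarrow> nat \<Rightarrow> nat \<Rightarrow> real \<Rightarrow> (nat \<Rightarrow> nat \<Rightarrow> real) \<Rightarrow> (nat \<Rightarrow> nat \<Rightarrow> real) \<Rightarrow> bool" where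
  "event_B e N T alt x y =
     (hausman N T x y (sig_eps_hat e N T x y) (sig_mu_hat e N T x y) \<le> (Phi_inv (1 - alt / 2))\<^sup>2)"

definition in_K :: "estimator \<Rightarrow> nat \<Rightarrow> nat \<Rightarrow> real \<Rightarrow> real \<Rightarrow> (nat \<Rightarrow> nat \<Rightarrow> real) \<Rightarrow> (nat \<Rightarrow> nat \<Rightarrow> real) \<Rightarrow> real \<Rightarrow> bool" where
  "in_K e N T al alt x y b =
     (let se = sig_eps_hat e N T x y; ph = psi_hat e N T x y; z = Phi_inv (1 - al / 2) in
      if event_B e N T alt x y
      then \<bar>b - beta_gls N T ph x y\<bar> \<le> z * sqrt (se\<^sup>2 / (SSW N T x + SSB N T x / qf ph T))
      else \<bar>b - betaW N T x y\<bar> \<le> z * se / sqrt (SSW N T x))"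

definition in_J :: "estimator \<Rightarrow> nat \<Rightarrow> nat \<Rightarrow> real \<Rightarrow> (nat \<Rightarrow> nat \<Rightarrow> real) \<Rightarrow> (nat \<Rightarrow> nat \<Rightarrow> real) \<Rightarrow> real \<Rightarrow> bool" where
  "in_J e N T c x y b =
     (\<bar>b - betaW N T x y\<bar> \<le> Phi_inv ((c + 1) / 2) * sig_eps_hat e N T x y / sqrt (SSW N T x))"

text \<open>Parameters: a, b (= beta), se (= sigma_eps), sx (= sigma_x), psi, rho, tau;
  sigma_mu = psi * sigma_eps.\<close>

definition cov_K :: "estimator \<Rightarrow> nat \<Rightarrow> nat \<Rightarrow> real \<Rightarrow> real \<Rightarrow>
    real \<Rightarrow> real \<Rightarrow> real \<Rightarrow> real \<Rightarrow> real \<Rightarrow> real \<Rightarrow> real \<Rightarrow> real" where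
  "cov_K e N T al alt a b se sx psi rho tau =
     measure (sample_space N T)
       {\<omega> \<in> space (sample_space N T).
          in_K e N T al alt (model_x sx rho \<omega>) (model_y T a b se sx psi rho tau \<omega>) b}"

definition cov_J :: "estimator \<Rightarrow> nat \<Rightarrow> nat \<Rightarrow> real \<Rightarrow>
    real \<Rightarrow> real \<Rightarrow> real \<Rightarrow> real \<Rightarrow> real \<Rightarrow> real \<Rightarrow> real \<Rightarrow> real" where
  "cov_J e N T c a b se sx psi rho tau =
     measure (sample_space N T)
       {\<omega> \<in> space (sample_space N T).
          in_J e N T c (model_x sx rho \<omega>) (model_y T a b se sx psi rho tau \<omega>) b}"

definition c_min :: "estimator \<Rightarrow> nat \<Rightarrow> nat \<Rightarrow> real \<Rightarrow> real \<Rightarrow> real \<Rightarrow>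
    real \<Rightarrow> real \<Rightarrow> real \<Rightarrow> real \<Rightarrow> real" where
  "c_min e N T al alt rt a b se sx =
     Inf {cov_K e N T al alt a b se sx psi rho tau | psi rho tau.
            -1 < tau \<and> tau < 1 \<and> 0 < psi \<and> 0 \<le> rho \<and> rho \<le> rt}"

definition c_star :: "estimator \<Rightarrow> nat \<Rightarrow> nat \<Rightarrow> real \<Rightarrow> real \<Rightarrow> real \<Rightarrow>
    real \<Rightarrow> real \<Rightarrow> real \<Rightarrow> real \<Rightarrow> real \<Rightarrow> real \<Rightarrow> real \<Rightarrow> real" where
  "c_star e N T al alt rt a b se sx psi rho tau =
     (THE c. 0 < c \<and> c < 1 \<and>
        cov_J e N T c a b se sx psi rho tau = c_min e N T al alt rt a b se sx)"

definition SSW_u :: "nat \<Rightarrow> nat \<Rightarrow> (nidx \<Rightarrow> real) \<Rightarrow> real" where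
  "SSW_u N T \<omega> = SSW N T (\<lambda>i t. \<omega> (U i t))"

definition w_hat :: "estimator \<Rightarrow> nat \<Rightarrow> nat \<Rightarrow> (nat \<Rightarrow> nat \<Rightarrow> real) \<Rightarrow> (nat \<Rightarrow> nat \<Rightarrow> real) \<Rightarrow> real" where
  "w_hat e N T x y = qf (psi_hat e N T x y) T / (qf (psi_hat e N T x y) T + r_ratio N T x)"

definition scaled_expected_length :: "estimator \<Rightarrow> nat \<Rightarrow> nat \<Rightarrow> real \<Rightarrow> real \<Rightarrow> real \<Rightarrow>
    real \<Rightarrow> real \<Rightarrow> real \<Rightarrow> real \<Rightarrow> real \<Rightarrow> real \<Rightarrow> real \<Rightarrow> real" where
  "scaled_expected_length e N T al alt rt a b se sx psi rho tau =
     (let M = sample_space N T;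
          X = (\<lambda>\<omega>. model_x sx rho \<omega>);
          Y = (\<lambda>\<omega>. model_y T a b se sx psi rho tau \<omega>);
          base = (\<lambda>\<omega>. (sig_eps_hat e N T (X \<omega>) (Y \<omega>) / se) * (SSW_u N T \<omega>) powr (-1/2));
          num = integral\<^sup>L M (\<lambda>\<omega>. base \<omega> *
                   (if event_B e N T alt (X \<omega>) (Y \<omega>)
                    then sqrt (w_hat e N T (X \<omega>) (Y \<omega>)) else 1));
          den = integral\<^sup>L M base;
          cs = c_star e N T al alt rt a b se sx psi rho tau
      in (Phi_inv (1 - al / 2) / Phi_inv ((cs + 1) / 2)) * (num / den))"

end

theory Submission imports Defs begin

text \<open>Negating the standard normal innovations w_i and \<epsilon>_it leaves their joint law unchanged
  and maps the model with parameter \<tau> to the model with parameter -\<tau>, keeping the covariates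
  fixed. Under this change the response is reflected about the true regression line,
  y_it \<mapsto> 2(a + \<beta> x_it) - y_it. All residuals merely change sign, so the three variance
  estimators, the Hausman statistic, the weight w and the distance of \<beta> from the
  within estimator are unchanged; hence so are c*, the numerator and the denominator of the
  scaled expected length.\<close>

subsection \<open>Reflecting the response about a regression line\<close>

lemma double_sum_squares_eq_0D:
  fixes f :: "nat \<Rightarrow> nat \<Rightarrow> real"
  assumes "(\<Sum>i<N. \<Sum>t<T. (f i t)\<^sup>2) = 0" "i < N" "t < T"
  shows "f i t = 0"
  using assms by (subst (asm) sum_nonneg_eq_0_iff) (auto simp: sum_nonneg_eq_0_iff sum_nonneg)

lemma sum_squares_eq_0D:
  fixes f :: "nat \<Rightarrow> real"
  assumes "(\<Sum>i<N. (f i)\<^sup>2) = 0" "i < N"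
  shows "f i = 0"
  using assms by (subst (asm) sum_nonneg_eq_0_iff) auto

lemma SSW_eq_0D: "SSW N T x = 0 \<Longrightarrow> i < N \<Longrightarrow> t < T \<Longrightarrow> x i t - mean_i T x i = 0"
  unfolding SSW_def by (rule double_sum_squares_eq_0D)

lemma SSB_eq_0D: "SSB N T x = 0 \<Longrightarrow> i < N \<Longrightarrow> mean_i T x i - mean_all N T x = 0"
  unfolding SSB_def by (rule sum_squares_eq_0D)

lemma ex_reflect_real: "(\<exists>u::real. P (c - u)) \<longleftrightarrow> (\<exists>u. P u)"
  by (metis diff_diff_eq2 add_diff_cancel_left')

lemma all_reflect_real: "(\<forall>u::real. P (c - u)) \<longleftrightarrow> (\<forall>u. P u)"
  by (metis diff_diff_eq2 add_diff_cancel_left')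

lemma qf_pos: "T > 0 \<Longrightarrow> qf psi T > 0"
  unfolding qf_def by (simp add: add_nonneg_pos)

lemma pooled_res_centred:
  "pooled_res N T x y i t =
     (y i t - mean_all N T y)
     - ((\<Sum>i<N. \<Sum>t<T. (x i t - mean_all N T x) * (y i t - mean_all N T y))
        / (\<Sum>i<N. \<Sum>t<T. (x i t - mean_all N T x)\<^sup>2)) * (x i t - mean_all N T x)"
proof -
  have "u - (m - B*c) - B*w = (u - m) - B*(w - c)" for u m B c w :: real
    by (simp add: algebra_simps)
  then show ?thesis unfolding pooled_res_def Let_def .
qed

locale reflected_response =
  fixes N T :: nat and a b :: real and x y y' :: "nat \<Rightarrow> nat \<Rightarrow> real"
  assumes N_pos: "N > 0" and T_pos: "T > 0"
    and reflected: "\<And>i t. i < N \<Longrightarrow> t < T \<Longrightarrow> y' i t = 2*a + 2*b*x i t - y i t"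
begin

lemma sum_reflected:
  "i < N \<Longrightarrow> (\<Sum>t<T. y' i t) = 2*a*real T + 2*b*(\<Sum>t<T. x i t) - (\<Sum>t<T. y i t)"
  by (simp add: reflected sum_subtractf sum.distrib sum_distrib_left)

lemma mean_i_reflected: "i < N \<Longrightarrow> mean_i T y' i = 2*a + 2*b*mean_i T x i - mean_i T y i"
  using T_pos by (simp add: mean_i_def sum_reflected field_simps)

lemma mean_all_reflected: "mean_all N T y' = 2*a + 2*b*mean_all N T x - mean_all N T y"
proof -
  have "(\<Sum>i<N. \<Sum>t<T. y' i t)
      = 2*a*real T*real N + 2*b*(\<Sum>i<N. \<Sum>t<T. x i t) - (\<Sum>i<N. \<Sum>t<T. y i t)"
    by (simp add: sum_reflected sum_subtractf sum.distrib sum_distrib_left)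
  then have "mean_all N T y'
      = (2*a*real T*real N + 2*b*(\<Sum>i<N. \<Sum>t<T. x i t) - (\<Sum>i<N. \<Sum>t<T. y i t)) / (real N * real T)"
    by (simp add: mean_all_def)
  also have "\<dots> = 2*a + 2*b*mean_all N T x - mean_all N T y"
    using N_pos T_pos by (simp add: mean_all_def field_simps)
  finally show ?thesis .
qed

lemma within_dev_reflected: "i < N \<Longrightarrow> t < T \<Longrightarrow>
   y' i t - mean_i T y' i = 2*b*(x i t - mean_i T x i) - (y i t - mean_i T y i)"
  by (simp add: mean_i_reflected reflected algebra_simps)

lemma between_dev_reflected: "i < N \<Longrightarrow>
   mean_i T y' i - mean_all N T y' = 2*b*(mean_i T x i - mean_all N T x) - (mean_i T y i - mean_all N T y)"
  by (simp add: mean_i_reflected mean_all_reflected algebra_simps)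

lemma total_dev_reflected: "i < N \<Longrightarrow> t < T \<Longrightarrow>
   y' i t - mean_all N T y' = 2*b*(x i t - mean_all N T x) - (y i t - mean_all N T y)"
  by (simp add: reflected mean_all_reflected algebra_simps)

lemma betaW_reflected: "betaW N T x y' = (if SSW N T x = 0 then 0 else 2*b - betaW N T x y)"
proof -
  have "(\<Sum>i<N. \<Sum>t<T. (x i t - mean_i T x i) * (y' i t - mean_i T y' i))
     = (\<Sum>i<N. \<Sum>t<T. 2*b*(x i t - mean_i T x i)\<^sup>2 - (x i t - mean_i T x i) * (y i t - mean_i T y i))"
    by (intro sum.cong refl) (simp add: within_dev_reflected power2_eq_square algebra_simps)
  also have "\<dots> = 2*b*SSW N T x - (\<Sum>i<N. \<Sum>t<T. (x i t - mean_i T x i) * (y i t - mean_i T y i))"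
    by (simp add: SSW_def sum_subtractf sum_distrib_left)
  finally show ?thesis by (auto simp: betaW_def field_simps)
qed

lemma betaB_reflected: "betaB N T x y' = (if SSB N T x = 0 then 0 else 2*b - betaB N T x y)"
proof -
  have "(\<Sum>i<N. (mean_i T x i - mean_all N T x) * (mean_i T y' i - mean_all N T y'))
     = (\<Sum>i<N. 2*b*(mean_i T x i - mean_all N T x)\<^sup>2
              - (mean_i T x i - mean_all N T x) * (mean_i T y i - mean_all N T y))"
    by (intro sum.cong refl) (simp add: between_dev_reflected power2_eq_square algebra_simps)
  also have "\<dots> = 2*b*SSB N T x - (\<Sum>i<N. (mean_i T x i - mean_all N T x) * (mean_i T y i - mean_all N T y))"
    by (simp add: SSB_def sum_subtractf sum_distrib_left)
  finally show ?thesis by (auto simp: betaB_def field_simps)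
qed

lemma fe_res_reflected: "i < N \<Longrightarrow> t < T \<Longrightarrow> fe_res N T x y' i t = - fe_res N T x y i t"
  by (cases "SSW N T x = 0")
     (auto simp: fe_res_def betaW_reflected within_dev_reflected SSW_eq_0D algebra_simps)

lemma be_res_reflected: "i < N \<Longrightarrow> be_res N T x y' i = - be_res N T x y i"
  by (cases "SSB N T x = 0")
     (auto simp: be_res_def betaB_reflected between_dev_reflected SSB_eq_0D algebra_simps)

lemma pooled_res_reflected:
  assumes "i < N" "t < T"
  shows "pooled_res N T x y' i t = - pooled_res N T x y i t"
proof -
  define D where "D = (\<Sum>i<N. \<Sum>t<T. (x i t - mean_all N T x)\<^sup>2)"
  define C where "C = (\<Sum>i<N. \<Sum>t<T. (x i t - mean_all N T x) * (y i t - mean_all N T y))"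
  have "(\<Sum>i<N. \<Sum>t<T. (x i t - mean_all N T x) * (y' i t - mean_all N T y'))
     = (\<Sum>i<N. \<Sum>t<T. 2*b*(x i t - mean_all N T x)\<^sup>2 - (x i t - mean_all N T x) * (y i t - mean_all N T y))"
    by (intro sum.cong refl) (simp add: total_dev_reflected power2_eq_square algebra_simps)
  also have "\<dots> = 2*b*D - C"
    by (simp add: D_def C_def sum_subtractf sum_distrib_left)
  finally have C': "(\<Sum>i<N. \<Sum>t<T. (x i t - mean_all N T x) * (y' i t - mean_all N T y')) = 2*b*D - C" .
  show ?thesis
  proof (cases "D = 0")
    case True
    then have "x i t - mean_all N T x = 0"
      using assms unfolding D_def by (rule double_sum_squares_eq_0D)
    then show ?thesis using assms by (simp add: pooled_res_centred total_dev_reflected)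
  next
    case False
    have "pooled_res N T x y' i t = (y' i t - mean_all N T y') - ((2*b*D - C)/D) * (x i t - mean_all N T x)"
      by (simp only: pooled_res_centred C' D_def[symmetric])
    also have "\<dots> = - ((y i t - mean_all N T y) - (C/D) * (x i t - mean_all N T x))"
      using False assms by (simp add: total_dev_reflected field_simps)
    also have "(y i t - mean_all N T y) - (C/D) * (x i t - mean_all N T x) = pooled_res N T x y i t"
      by (simp only: pooled_res_centred C_def[symmetric] D_def[symmetric])
    finally show ?thesis .
  qed
qed

lemma est_unbiased_reflected: "est_unbiased N T x y' = est_unbiased N T x y"
proof -
  have "(\<Sum>i<N. \<Sum>t<T. (fe_res N T x y' i t)\<^sup>2) = (\<Sum>i<N. \<Sum>t<T. (fe_res N T x y i t)\<^sup>2)"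
    by (intro sum.cong refl) (simp add: fe_res_reflected)
  moreover have "(\<Sum>i<N. (be_res N T x y' i)\<^sup>2) = (\<Sum>i<N. (be_res N T x y i)\<^sup>2)"
    by (intro sum.cong refl) (simp add: be_res_reflected)
  ultimately show ?thesis by (simp add: est_unbiased_def)
qed

lemma loglik_reflected: "loglik N T x y' a' b' s m = loglik N T x y (2*a - a') (2*b - b') s m"
proof -
  have dev: "y' i t - a' - b' * x i t = - (y i t - (2*a - a') - (2*b - b') * x i t)"
    if "i < N" "t < T" for i t
    using that by (simp add: reflected algebra_simps)
  have "(\<Sum>t<T. (y' i t - a' - b' * x i t)\<^sup>2) = (\<Sum>t<T. (y i t - (2*a - a') - (2*b - b') * x i t)\<^sup>2)"
    if "i < N" for i
    using that by (intro sum.cong refl) (metis dev lessThan_iff power2_minus)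
  moreover have "(\<Sum>t<T. y' i t - a' - b' * x i t) = - (\<Sum>t<T. y i t - (2*a - a') - (2*b - b') * x i t)"
    if "i < N" for i
    using that by (simp add: dev sum_negf[symmetric])
  ultimately show ?thesis unfolding loglik_def
    by (intro arg_cong2[where f="(-)"] refl arg_cong[where f="\<lambda>z. (1/2) * z"] sum.cong) simp_all
qed

text \<open>The likelihood maximisers for y' are those for y reflected in (a, b); the variance
  components they select are the same.\<close>
lemma est_hsiao_reflected: "est_hsiao N T x y' = est_hsiao N T x y"
  unfolding est_hsiao_def loglik_reflected by (subst ex_reflect_real all_reflect_real)+ (rule refl)

lemma est_wooldridge_reflected: "est_wooldridge eps K N T x y' = est_wooldridge eps K N T x y"
proof -
  have "(\<Sum>i<N. \<Sum>t<T. \<Sum>s\<in>{Suc t..<T}. pooled_res N T x y' i t * pooled_res N T x y' i s)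
      = (\<Sum>i<N. \<Sum>t<T. \<Sum>s\<in>{Suc t..<T}. pooled_res N T x y i t * pooled_res N T x y i s)"
    by (intro sum.cong refl) (simp add: pooled_res_reflected)
  moreover have "(\<Sum>i<N. \<Sum>t<T. (pooled_res N T x y' i t)\<^sup>2) = (\<Sum>i<N. \<Sum>t<T. (pooled_res N T x y i t)\<^sup>2)"
    by (intro sum.cong refl) (simp add: pooled_res_reflected)
  ultimately show ?thesis unfolding est_wooldridge_def Let_def by simp
qed

lemma est_var_reflected: "est_var e N T x y' = est_var e N T x y"
  by (cases e)
     (simp_all add: est_var_def est_unbiased_reflected est_hsiao_reflected est_wooldridge_reflected)

lemma sig_eps_hat_reflected: "sig_eps_hat e N T x y' = sig_eps_hat e N T x y"
  and sig_mu_hat_reflected: "sig_mu_hat e N T x y' = sig_mu_hat e N T x y"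
  and psi_hat_reflected: "psi_hat e N T x y' = psi_hat e N T x y"
  by (simp_all add: sig_eps_hat_def sig_mu_hat_def psi_hat_def est_var_reflected)

lemma in_J_reflected: "in_J e N T c x y' b = in_J e N T c x y b"
proof -
  have "\<bar>b - betaW N T x y'\<bar> = \<bar>b - betaW N T x y\<bar>"
  proof (cases "SSW N T x = 0")
    case True
    then show ?thesis by (simp add: betaW_reflected betaW_def)
  next
    case False
    have "\<bar>b - (2*b - betaW N T x y)\<bar> = \<bar>b - betaW N T x y\<bar>"
      by (subst abs_minus_commute) (simp add: algebra_simps)
    with False show ?thesis by (simp add: betaW_reflected)
  qed
  then show ?thesis by (simp add: in_J_def sig_eps_hat_reflected)
qed

lemma length_factor_reflected:
  "(if event_B e N T alt x y' then sqrt (w_hat e N T x y') else 1)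
   = (if event_B e N T alt x y then sqrt (w_hat e N T x y) else 1)"
proof (cases "SSW N T x = 0 \<or> SSB N T x = 0")
  case True
  \<comment> \<open>then r(x) = 0 by the convention x / 0 = 0, so w = 1 whatever the outcome of the pretest\<close>
  then have "w_hat e N T x z = 1" for z
    using qf_pos[OF T_pos, of "psi_hat e N T x z"] by (auto simp: w_hat_def r_ratio_def)
  then show ?thesis by simp
next
  case False
  then have "hausman N T x y' s m = hausman N T x y s m" for s m
    by (simp add: hausman_def betaW_reflected betaB_reflected power2_commute)
  then show ?thesis
    by (simp add: event_B_def w_hat_def sig_eps_hat_reflected sig_mu_hat_reflected psi_hat_reflected)
qed

end

subsection \<open>Measure-preserving sign flips\<close>

lemma integral_eq_integral_involution:
  fixes f :: "'a \<Rightarrow> real"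
  assumes g: "g \<in> M \<rightarrow>\<^sub>M M" and distr: "distr M M g = M"
    and inv: "\<And>\<omega>. \<omega> \<in> space M \<Longrightarrow> g (g \<omega>) = \<omega>"
  shows "integral\<^sup>L M f = integral\<^sup>L M (\<lambda>\<omega>. f (g \<omega>))"
proof (cases "f \<in> borel_measurable M")
  case True
  then show ?thesis
    using g by (subst (1) distr[symmetric]) (rule integral_distr)
next
  case False
  have "(\<lambda>\<omega>. f (g \<omega>)) \<notin> borel_measurable M"
  proof
    assume "(\<lambda>\<omega>. f (g \<omega>)) \<in> borel_measurable M"
    then have "(\<lambda>\<omega>. f (g (g \<omega>))) \<in> borel_measurable M"
      using measurable_compose[OF g] by blast
    then have "f \<in> borel_measurable M"
      using inv by (simp cong: measurable_cong)
    with False show False ..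
  qed
  with False show ?thesis
    by (metis borel_measurable_integrable not_integrable_integral_eq)
qed

lemma measure_eq_measure_involution:
  assumes g: "g \<in> M \<rightarrow>\<^sub>M M" and distr: "distr M M g = M"
    and inv: "\<And>\<omega>. \<omega> \<in> space M \<Longrightarrow> g (g \<omega>) = \<omega>"
  shows "measure M {\<omega> \<in> space M. P \<omega>} = measure M {\<omega> \<in> space M. P (g \<omega>)}"
proof -
  let ?S = "{\<omega> \<in> space M. P \<omega>}" and ?S' = "{\<omega> \<in> space M. P (g \<omega>)}"
  have preimage: "g -` ?S \<inter> space M = ?S'" and preimage': "g -` ?S' \<inter> space M = ?S"
    using measurable_space[OF g] inv by auto
  show ?thesis
  proof (cases "?S \<in> sets M")
    case True
    have "measure M ?S = measure (distr M M g) ?S"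
      by (simp add: distr)
    also have "\<dots> = measure M ?S'"
      by (rule measure_distr[OF g True, unfolded preimage])
    finally show ?thesis .
  next
    case False
    then have "?S' \<notin> sets M"
      using measurable_sets[OF g, of ?S'] preimage' by auto
    with False show ?thesis by (simp add: measure_notin_sets)
  qed
qed

lemma distr_std_normal_uminus: "distr std_normal borel uminus = std_normal"
proof -
  have "std_normal = density (distr lborel borel uminus) std_normal_density"
    by (simp add: std_normal_def lborel_distr_uminus)
  also have "\<dots> = distr (density lborel (\<lambda>x. std_normal_density (- x))) borel uminus"
    by (rule density_distr) auto
  also have "(\<lambda>x. ennreal (std_normal_density (- x))) = std_normal_density"
    by (simp add: normal_density_def)
  finally show ?thesis by (simp add: std_normal_def)
qed

definition flip_coords :: "'i set \<Rightarrow> 'i set \<Rightarrow> ('i \<Rightarrow> real) \<Rightarrow> 'i \<Rightarrow> real" where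
  "flip_coords I F \<omega> = (\<lambda>j\<in>I. if j \<in> F then - \<omega> j else \<omega> j)"

lemma flip_coords_apply:
  "\<omega> \<in> space (Pi\<^sub>M I M) \<Longrightarrow> flip_coords I F \<omega> j = (if j \<in> I \<inter> F then - \<omega> j else \<omega> j)"
  by (auto simp: flip_coords_def space_PiM PiE_def extensional_def)

lemma flip_coords_flip_coords:
  "\<omega> \<in> space (Pi\<^sub>M I M) \<Longrightarrow> flip_coords I F (flip_coords I F \<omega>) = \<omega>"
  by (auto simp: flip_coords_def space_PiM PiE_def extensional_def)

lemma measurable_flip_coords:
  "flip_coords I F \<in> Pi\<^sub>M I (\<lambda>_. std_normal) \<rightarrow>\<^sub>M Pi\<^sub>M I (\<lambda>_. std_normal)"
  unfolding flip_coords_def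
proof (rule measurable_restrict)
  fix j assume j: "j \<in> I"
  let ?P = "Pi\<^sub>M I (\<lambda>_. std_normal)"
  have to_borel: "?P \<rightarrow>\<^sub>M std_normal = borel_measurable ?P"
    by (rule measurable_cong_sets) (simp_all add: std_normal_def)
  have "(\<lambda>\<omega>. \<omega> j) \<in> borel_measurable ?P"
    using measurable_component_singleton[OF j, of "\<lambda>_. std_normal"] to_borel by simp
  then have "(\<lambda>\<omega>. if j \<in> F then - \<omega> j else \<omega> j) \<in> borel_measurable ?P"
    by (cases "j \<in> F") (simp_all add: borel_measurable_uminus)
  then show "(\<lambda>\<omega>. if j \<in> F then - \<omega> j else \<omega> j) \<in> ?P \<rightarrow>\<^sub>M std_normal"
    using to_borel by simp
qed

lemma distr_flip_coords:
  assumes "finite I"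
  shows "distr (Pi\<^sub>M I (\<lambda>_. std_normal)) (Pi\<^sub>M I (\<lambda>_. std_normal)) (flip_coords I F)
       = Pi\<^sub>M I (\<lambda>_. std_normal)"
proof -
  interpret product_sigma_finite "\<lambda>_. std_normal"
    by (simp add: product_sigma_finite_def prob_space_imp_sigma_finite std_normal_def
        prob_space_normal_density)
  let ?P = "Pi\<^sub>M I (\<lambda>_. std_normal)"
  show ?thesis
  proof (rule PiM_eqI)
    fix A assume A: "\<And>i. i \<in> I \<Longrightarrow> A i \<in> sets std_normal"
    define A' where "A' i = (if i \<in> F then uminus -` A i else A i)" for i
    have A': "A' i \<in> sets std_normal" if "i \<in> I" for i
      using A[OF that]
        measurable_sets[OF borel_measurable_uminus[OF measurable_ident_sets[OF refl]], of "A i"]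
      by (auto simp: A'_def std_normal_def)
    have preimage: "flip_coords I F -` Pi\<^sub>E I A \<inter> space ?P = Pi\<^sub>E I A'"
      by (auto simp: flip_coords_def space_PiM A'_def PiE_def Pi_def std_normal_def split: if_splits)
    have "emeasure (distr ?P ?P (flip_coords I F)) (Pi\<^sub>E I A) = emeasure ?P (Pi\<^sub>E I A')"
      using emeasure_distr[OF measurable_flip_coords sets_PiM_I_finite[OF assms A]]
      by (simp only: preimage)
    also have "\<dots> = (\<Prod>i\<in>I. emeasure std_normal (A' i))"
      using A' assms by (intro emeasure_PiM) auto
    also have "\<dots> = (\<Prod>i\<in>I. emeasure std_normal (A i))"
    proof (intro prod.cong refl)
      fix i assume "i \<in> I"
      then have "emeasure std_normal (uminus -` A i) = emeasure std_normal (A i)"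
        using A by (subst (2) distr_std_normal_uminus[symmetric])
          (simp add: emeasure_distr std_normal_def)
      then show "emeasure std_normal (A' i) = emeasure std_normal (A i)"
        by (simp add: A'_def)
    qed
    finally show "emeasure (distr ?P ?P (flip_coords I F)) (Pi\<^sub>E I A) = (\<Prod>i\<in>I. emeasure std_normal (A i))" .
  qed (simp_all add: assms)
qed

definition noise_idxs :: "nidx set" where
  "noise_idxs = {j. case j of W _ \<Rightarrow> True | Eps _ _ \<Rightarrow> True | _ \<Rightarrow> False}"

definition flip_noise :: "nat \<Rightarrow> nat \<Rightarrow> (nidx \<Rightarrow> real) \<Rightarrow> nidx \<Rightarrow> real" where
  "flip_noise N T = flip_coords (idxs N T) noise_idxs"

lemma finite_idxs: "finite (idxs N T)"
proof -
  have "idxs N T = case_prod U ` ({..<N} \<times> {..<T}) \<union> V ` {..<N} \<union> W ` {..<N}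
      \<union> case_prod Eps ` ({..<N} \<times> {..<T})"
    unfolding idxs_def by auto
  then show ?thesis by simp
qed

lemma measurable_flip_noise: "flip_noise N T \<in> sample_space N T \<rightarrow>\<^sub>M sample_space N T"
  and distr_flip_noise: "distr (sample_space N T) (sample_space N T) (flip_noise N T) = sample_space N T"
  and flip_noise_flip_noise:
    "\<omega> \<in> space (sample_space N T) \<Longrightarrow> flip_noise N T (flip_noise N T \<omega>) = \<omega>"
  unfolding flip_noise_def sample_space_def
  by (simp_all add: measurable_flip_coords distr_flip_coords finite_idxs flip_coords_flip_coords)

lemma flip_noise_apply:
  "\<omega> \<in> space (sample_space N T) \<Longrightarrow>
     flip_noise N T \<omega> j = (if j \<in> idxs N T \<inter> noise_idxs then - \<omega> j else \<omega> j)"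
  unfolding flip_noise_def sample_space_def by (rule flip_coords_apply)

lemma model_x_flip_noise:
  "\<omega> \<in> space (sample_space N T) \<Longrightarrow> model_x sx rho (flip_noise N T \<omega>) = model_x sx rho \<omega>"
  by (intro ext) (simp add: model_x_def flip_noise_apply noise_idxs_def)

lemma SSW_u_flip_noise:
  "\<omega> \<in> space (sample_space N T) \<Longrightarrow> SSW_u N T (flip_noise N T \<omega>) = SSW_u N T \<omega>"
  by (simp add: SSW_u_def flip_noise_apply noise_idxs_def)

text \<open>The conditional mean of \<mu>_i is odd in \<tau>, while the innovation and error terms change
  sign under the flip.\<close>
lemma model_y_flip_noise:
  assumes "\<omega> \<in> space (sample_space N T)" "i < N" "t < T"
  shows "model_y T a b se sx psi rho (- tau) (flip_noise N T \<omega>) i t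
       = 2*a + 2*b*model_x sx rho \<omega> i t - model_y T a b se sx psi rho tau \<omega> i t"
proof -
  have "W i \<in> idxs N T \<inter> noise_idxs" "Eps i t \<in> idxs N T \<inter> noise_idxs"
    using assms by (auto simp: idxs_def noise_idxs_def)
  then show ?thesis
    using assms by (simp add: model_y_def model_mu_def Let_def model_x_flip_noise tau_tilde_def
        flip_noise_apply algebra_simps)
qed

lemma reflected_response_flip_noise:
  "N > 0 \<Longrightarrow> T > 0 \<Longrightarrow> \<omega> \<in> space (sample_space N T) \<Longrightarrow>
   reflected_response N T a b (model_x sx rho \<omega>) (model_y T a b se sx psi rho tau \<omega>)
     (model_y T a b se sx psi rho (- tau) (flip_noise N T \<omega>))"
  by unfold_locales (simp_all add: model_y_flip_noise)

lemma measure_model_neg_tau: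
  assumes NT: "N > 0" "T > 0"
    and invariant: "\<And>x y y'. reflected_response N T a b x y y' \<Longrightarrow> P x y' = P x y"
  shows "measure (sample_space N T) {\<omega> \<in> space (sample_space N T).
           P (model_x sx rho \<omega>) (model_y T a b se sx psi rho (- tau) \<omega>)}
       = measure (sample_space N T) {\<omega> \<in> space (sample_space N T).
           P (model_x sx rho \<omega>) (model_y T a b se sx psi rho tau \<omega>)}"
  by (subst measure_eq_measure_involution[OF measurable_flip_noise distr_flip_noise flip_noise_flip_noise])
     (simp_all add: model_x_flip_noise invariant[OF reflected_response_flip_noise[OF NT]] cong: conj_cong)

lemma integral_model_neg_tau:
  fixes g :: "(nat \<Rightarrow> nat \<Rightarrow> real) \<Rightarrow> (nat \<Rightarrow> nat \<Rightarrow> real) \<Rightarrow> real \<Rightarrow> real"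
  assumes NT: "N > 0" "T > 0"
    and invariant: "\<And>x y y' s. reflected_response N T a b x y y' \<Longrightarrow> g x y' s = g x y s"
  shows "(\<integral>\<omega>. g (model_x sx rho \<omega>) (model_y T a b se sx psi rho (- tau) \<omega>) (SSW_u N T \<omega>) \<partial>sample_space N T)
       = (\<integral>\<omega>. g (model_x sx rho \<omega>) (model_y T a b se sx psi rho tau \<omega>) (SSW_u N T \<omega>) \<partial>sample_space N T)"
  by (subst integral_eq_integral_involution[OF measurable_flip_noise distr_flip_noise flip_noise_flip_noise])
     (auto simp: model_x_flip_noise SSW_u_flip_noise invariant[OF reflected_response_flip_noise[OF NT]]
       intro!: Bochner_Integration.integral_cong)

theorem theorem6:
  fixes e :: estimator and N T :: nat
    and al alt rt a b se sx psi rho tau :: real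
  assumes "valid_estimator e"
    and "N \<ge> 3" and "T \<ge> 2"
    and "0 < al" and "al < 1" and "0 < alt" and "alt < 1"
    and "0 < rt" and "rt < 1"
    and "0 < se" and "0 < sx" and "0 < psi"
    and "0 \<le> rho" and "rho < 1"
    and "-1 < tau" and "tau < 1"
  shows "scaled_expected_length e N T al alt rt a b se sx psi rho (- tau)
         = scaled_expected_length e N T al alt rt a b se sx psi rho tau"
proof -
  have NT: "N > 0" "T > 0" using assms(2,3) by auto
  have "cov_J e N T c a b se sx psi rho (- tau) = cov_J e N T c a b se sx psi rho tau" for c
    unfolding cov_J_def
    by (rule measure_model_neg_tau[OF NT]) (rule reflected_response.in_J_reflected)
  then have c_star: "c_star e N T al alt rt a b se sx psi rho (- tau) = c_star e N T al alt rt a b se sx psi rho tau"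
    unfolding c_star_def by simp
  have num: "(\<integral>\<omega>. g (model_x sx rho \<omega>) (model_y T a b se sx psi rho (- tau) \<omega>) (SSW_u N T \<omega>) \<partial>sample_space N T)
       = (\<integral>\<omega>. g (model_x sx rho \<omega>) (model_y T a b se sx psi rho tau \<omega>) (SSW_u N T \<omega>) \<partial>sample_space N T)"
    if "g = (\<lambda>x y s. sig_eps_hat e N T x y / se * s powr (-1/2)
                    * (if event_B e N T alt x y then sqrt (w_hat e N T x y) else 1))" for g
    using that by (intro integral_model_neg_tau[OF NT])
      (simp add: reflected_response.sig_eps_hat_reflected reflected_response.length_factor_reflected)
  have den: "(\<integral>\<omega>. g (model_x sx rho \<omega>) (model_y T a b se sx psi rho (- tau) \<omega>) (SSW_u N T \<omega>) \<partial>sample_space N T)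
       = (\<integral>\<omega>. g (model_x sx rho \<omega>) (model_y T a b se sx psi rho tau \<omega>) (SSW_u N T \<omega>) \<partial>sample_space N T)"
    if "g = (\<lambda>x y s. sig_eps_hat e N T x y / se * s powr (-1/2))" for g
    using that by (intro integral_model_neg_tau[OF NT]) (simp add: reflected_response.sig_eps_hat_reflected)
  show ?thesis
    unfolding scaled_expected_length_def Let_def c_star num[OF refl] den[OF refl] ..
qed

end
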